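(* Let $\alpha\in(0,1]$, $\gamma\geqslant0$, and let $g,g_0,g_1:(0,\infty)^2\to\mathbb{R}$ with $g>0$, $g_0\geqslant0$, $g_1\geqslant0$, $g=g_0+g_1$, such that (i) $e^{\gamma(x+y)}g(x,y)=e^{\gamma(1/x+1/y)}g(1/x,1/y)$ for all $x,y>0$; (ii) $g_1(x,y)\leqslant e^{-\alpha\gamma(x-x')}g_1(x',y)$ for all $0<x'\leqslant x$, $y>0$, and $g_1(x,y)\leqslant e^{-\alpha\gamma(y-y')}g_1(x,y')$ for all $0<y'\leqslant y$, $x>0$. Then for every $(x,y)\in\Omega_\alpha$ the algorithm $\mathsf{B}_\alpha$ (see context) started at $(x,y)$ is well defined and stops after a finite number $N$ of points $(x_1,y_1),\dots,(x_N,y_N)$, and $$g(x,y)\leqslant\sum_{i=1}^N g_0(x_i,y_i)+g_1(x_N,y_N).$$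
   Context: Let $f_\alpha(x)=\max\left\{\frac1x,\ \frac12\left(\alpha(2-x)+\sqrt{\alpha^2(2-x)^2+4(1-\alpha)}\right)\right\}$ and $\Omega_\alpha=\{(x,y): x>1,\ y>f_\alpha(x)\}\cup\{(x,y): y>1,\ x>f_\alpha(y)\}$. Algorithm $\mathsf{B}_\alpha$: set $(x_1,y_1)=(x,y)$. Given $(a,b)=(x_i,y_i)$: (1) if $a>1$ and $b>1$, stop and set $N=i$. (2) If $a\leqslant1$: put $\tilde a=a$ if $a<1$ and $\tilde a=\frac{2}{\alpha(b-1)+2}$ if $a=1$; let $s>0$ be the unique positive solution of $\alpha b+\tilde a-\frac1{\tilde a}+(1-\alpha)s-\frac1s=0$; set $(x_{i+1},y_{i+1})=(1/\tilde a,\ 1/s)$. (3) Otherwise ($a>1$, $b\leqslant1$): same with the roles of the two coordinates exchanged, i.e. $\tilde b=b$ if $b<1$, $\tilde b=\frac{2}{\alpha(a-1)+2}$ if $b=1$, $s>0$ the unique positive solution of $\alpha a+\tilde b-\frac1{\tilde b}+(1-\alpha)s-\frac1s=0$, and $(x_{i+1},y_{i+1})=(1/s,\ 1/\tilde b)$. *)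

theory Defs
  imports Complex_Main
begin

definition f_alpha :: "real \<Rightarrow> real \<Rightarrow> real" where
  "f_alpha \<alpha> x = max (1 / x)
     ((\<alpha> * (2 - x) + sqrt (\<alpha>\<^sup>2 * (2 - x)\<^sup>2 + 4 * (1 - \<alpha>))) / 2)"

definition Omega_alpha :: "real \<Rightarrow> (real \<times> real) set" where
  "Omega_alpha \<alpha> = {(x, y). x > 1 \<and> y > f_alpha \<alpha> x} \<union> {(x, y). y > 1 \<and> x > f_alpha \<alpha> y}"

definition B_tilde :: "real \<Rightarrow> real \<Rightarrow> real \<Rightarrow> real" where
  "B_tilde \<alpha> a b = (if a < 1 then a else 2 / (\<alpha> * (b - 1) + 2))"

definition B_eq :: "real \<Rightarrow> real \<Rightarrow> real \<Rightarrow> real \<Rightarrow> bool" where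
  "B_eq \<alpha> b t s \<longleftrightarrow> s > 0 \<and> \<alpha> * b + t - 1 / t + (1 - \<alpha>) * s - 1 / s = 0"

definition B_s :: "real \<Rightarrow> real \<Rightarrow> real \<Rightarrow> real" where
  "B_s \<alpha> b t = (THE s. B_eq \<alpha> b t s)"

definition B_step :: "real \<Rightarrow> real \<times> real \<Rightarrow> real \<times> real" where
  "B_step \<alpha> p = (case p of (a, b) \<Rightarrow>
     if a > 1 \<and> b > 1 then (a, b)
     else if a \<le> 1 then
       (let t = B_tilde \<alpha> a b in (1 / t, 1 / B_s \<alpha> b t))
     else
       (let t = B_tilde \<alpha> b a in (1 / B_s \<alpha> a t, 1 / t)))"

definition B_welldef :: "real \<Rightarrow> real \<times> real \<Rightarrow> bool" where
  "B_welldef \<alpha> p = (case p of (a, b) \<Rightarrow>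
     if a \<le> 1 then
       (B_tilde \<alpha> a b > 0 \<and> (\<exists>!s. B_eq \<alpha> b (B_tilde \<alpha> a b) s))
     else
       (B_tilde \<alpha> b a > 0 \<and> (\<exists>!s. B_eq \<alpha> a (B_tilde \<alpha> b a) s)))"

definition B_pt :: "real \<Rightarrow> real \<times> real \<Rightarrow> nat \<Rightarrow> real \<times> real" where
  "B_pt \<alpha> p i = (B_step \<alpha> ^^ (i - 1)) p"

end

theory Submission
  imports Defs
begin

(* With psi s = (1 - \<alpha>) s - 1/s, which is strictly increasing on s > 0, the step from a point
   (a, b) with a \<le> 1 solves psi s = 1/t - t - \<alpha> b.  Along the orbit the level
   psi (1/a) - \<alpha> b (a the coordinate \<le> 1, b the other one) is conserved, and on \<Omega>_\<alpha> it lies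
   below -2\<alpha>.  Each step then lowers the larger coordinate by at least half of
   psi b - \<alpha> b - level, which is concave in b and hence bounded away from 0 along the orbit,
   so the algorithm stops.  The equation for s says t + s = 1/t + 1/s - \<alpha> (b - s), which is
   exactly what lets the inversion symmetry of g absorb the decay factors of g1:
   g1 (a, b) \<le> g at the next point.  Summing g = g0 + g1 along the orbit telescopes. *)

lemma funpow_reaches_by_descent:
  fixes f :: "'a \<Rightarrow> 'a" and V :: "'a \<Rightarrow> real"
  assumes "0 < d" "P p"
    and descent: "\<And>q. P q \<Longrightarrow> \<not> S q \<Longrightarrow> \<not> S (f q) \<Longrightarrow> P (f q) \<and> V (f q) \<le> V q - d"
    and bounded: "\<And>q. P q \<Longrightarrow> \<not> S q \<Longrightarrow> c \<le> V q"
  shows "\<exists>n. S ((f ^^ n) p)"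
proof (rule ccontr)
  assume "\<nexists>n. S ((f ^^ n) p)"
  then have never: "\<not> S ((f ^^ n) p)" for n by blast
  have orbit: "P ((f ^^ n) p) \<and> V ((f ^^ n) p) \<le> V p - n * d" for n
  proof (induction n)
    case (Suc n)
    with descent[of "(f ^^ n) p"] never[of n] never[of "Suc n"]
    have "P ((f ^^ Suc n) p)" "V ((f ^^ Suc n) p) \<le> V p - n * d - d" by auto
    then show ?case by (simp add: algebra_simps)
  qed (use \<open>P p\<close> in simp)
  obtain n :: nat where "V p - c < n * d" using reals_Archimedean3[OF \<open>0 < d\<close>] by blast
  moreover have "c \<le> V ((f ^^ n) p)" using bounded orbit never by blast
  ultimately show False using orbit[of n] by linarith
qed

lemma funpow_telescoping_bound:
  fixes f :: "'a \<Rightarrow> 'a" and G H :: "'a \<Rightarrow> real"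
  assumes "\<And>i. i < n \<Longrightarrow> G ((f ^^ i) p) \<le> H ((f ^^ i) p) + G ((f ^^ Suc i) p)"
  shows "G p \<le> (\<Sum>i<n. H ((f ^^ i) p)) + G ((f ^^ n) p)"
  using assms
proof (induction n)
  case (Suc n)
  then have "G p \<le> (\<Sum>i<n. H ((f ^^ i) p)) + G ((f ^^ n) p)" by simp
  moreover have "G ((f ^^ n) p) \<le> H ((f ^^ n) p) + G ((f ^^ Suc n) p)" using Suc.prems by simp
  ultimately show ?case by simp
qed simp

lemma min_le_affine_minus_inverse:
  fixes c u v w :: real
  assumes "0 < u" "u \<le> w" "w \<le> v"
  shows "min (c * u - 1 / u) (c * v - 1 / v) \<le> c * w - 1 / w"
proof (cases "u = v")
  case False
  define h where "h x = c * x - 1 / x" for x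
  have "(v - u) * h w - ((v - w) * h u + (w - u) * h v) = (v - u) * (w - u) * (v - w) / (u * v * w)"
    using assms unfolding h_def by (simp add: field_simps)
  also have "\<dots> \<ge> 0" using assms by simp
  finally have chord: "(v - w) * h u + (w - u) * h v \<le> (v - u) * h w" by simp
  have "(v - u) * min (h u) (h v) = (v - w) * min (h u) (h v) + (w - u) * min (h u) (h v)"
    by (simp add: algebra_simps)
  also have "\<dots> \<le> (v - w) * h u + (w - u) * h v"
    using assms by (intro add_mono mult_left_mono) auto
  finally have "(v - u) * min (h u) (h v) \<le> (v - u) * h w" using chord by linarith
  then show ?thesis using assms False unfolding h_def by simp
qed (use assms in simp)

definition psi :: "real \<Rightarrow> real \<Rightarrow> real" where
  "psi \<alpha> s = (1 - \<alpha>) * s - 1 / s"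

lemma psi_strict_mono: "\<alpha> \<le> 1 \<Longrightarrow> strict_mono_on {0<..} (psi \<alpha>)"
proof (rule strict_mono_onI)
  fix u v :: real
  assume "\<alpha> \<le> 1" "u \<in> {0<..}" "u < v"
  then have "(1 - \<alpha>) * u \<le> (1 - \<alpha>) * v" "1 / v < 1 / u"
    by (auto intro: mult_left_mono divide_strict_left_mono)
  then show "psi \<alpha> u < psi \<alpha> v" unfolding psi_def by linarith
qed

lemma psi_less_iff: "\<alpha> \<le> 1 \<Longrightarrow> 0 < u \<Longrightarrow> 0 < v \<Longrightarrow> psi \<alpha> u < psi \<alpha> v \<longleftrightarrow> u < v"
  using strict_mono_on_less[OF psi_strict_mono] by simp

lemma psi_diff_le:
  assumes "0 \<le> \<alpha>" "1 \<le> u" "u \<le> v"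
  shows "psi \<alpha> v - psi \<alpha> u \<le> 2 * (v - u)"
proof -
  have "1 / u - 1 / v = (v - u) / (u * v)" using assms by (simp add: field_simps)
  also have "\<dots> \<le> v - u"
    using assms mult_mono[of 1 u 1 v] by (simp add: divide_le_eq mult_le_cancel_left1)
  finally have "1 / u - 1 / v \<le> v - u" .
  moreover have "(1 - \<alpha>) * (v - u) \<le> v - u" using assms by (simp add: algebra_simps mult_left_mono)
  ultimately show ?thesis unfolding psi_def by (simp add: algebra_simps)
qed

lemma psi_eq_unique_solution:
  assumes "\<alpha> \<le> 1" "\<alpha> < 1 \<or> c < 0"
  shows "\<exists>!s. 0 < s \<and> psi \<alpha> s = c"
proof -
  define R where "R = sqrt (c\<^sup>2 + 4 * (1 - \<alpha>))"
  have R2: "R\<^sup>2 = c\<^sup>2 + 4 * (1 - \<alpha>)" unfolding R_def using assms(1) by simp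
  have "\<bar>c\<bar> \<le> R" unfolding R_def using assms(1) by (intro real_le_rsqrt) simp
  moreover have "\<bar>c\<bar> < R" if "\<alpha> < 1"
  proof (rule power_less_imp_less_base)
    show "\<bar>c\<bar> ^ 2 < R ^ 2" using R2 that by simp
  qed (use \<open>\<bar>c\<bar> \<le> R\<close> in linarith)
  ultimately have R_c: "0 < R - c" using assms(2) by linarith
  have one_minus: "1 - \<alpha> = (R + c) * (R - c) / 4"
    using R2 by (simp add: algebra_simps power2_eq_square)
  \<comment> \<open>the positive root of \<open>(1 - \<alpha>) s\<^sup>2 - c s - 1\<close>, in a form that stays valid for \<open>\<alpha> = 1\<close>\<close>
  define s where "s = 2 / (R - c)"
  have "psi \<alpha> s = (R + c) / 2 - (R - c) / 2"
    unfolding psi_def s_def one_minus using R_c by (simp add: field_simps)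
  also have "\<dots> = c" by (simp add: field_simps)
  finally have "0 < s \<and> psi \<alpha> s = c" unfolding s_def using R_c by simp
  moreover have "s' = s" if "0 < s'" "psi \<alpha> s' = c" for s'
    using strict_mono_on_eqD[OF psi_strict_mono[OF assms(1)], of s s'] that \<open>0 < s \<and> psi \<alpha> s = c\<close> by simp
  ultimately show ?thesis by blast
qed

lemma B_eq_iff_psi: "B_eq \<alpha> b t s \<longleftrightarrow> 0 < s \<and> psi \<alpha> s = 1 / t - t - \<alpha> * b"
  unfolding B_eq_def psi_def by auto

lemma B_s_solves:
  assumes "\<alpha> \<le> 1" "0 < t" "1 < t * b"
  shows "\<exists>!s. B_eq \<alpha> b t s" "0 < B_s \<alpha> b t" "psi \<alpha> (B_s \<alpha> b t) = 1 / t - t - \<alpha> * b"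
proof -
  have "1 / t < b" using assms by (simp add: field_simps)
  then have "\<alpha> < 1 \<or> 1 / t - t - \<alpha> * b < 0" using assms by (cases "\<alpha> = 1") auto
  from psi_eq_unique_solution[OF assms(1) this]
  show unique: "\<exists>!s. B_eq \<alpha> b t s" unfolding B_eq_iff_psi .
  have "B_eq \<alpha> b t (B_s \<alpha> b t)" unfolding B_s_def by (rule theI'[OF unique])
  then show "0 < B_s \<alpha> b t" "psi \<alpha> (B_s \<alpha> b t) = 1 / t - t - \<alpha> * b"
    unfolding B_eq_iff_psi by auto
qed

lemma B_tilde_bounds:
  assumes "0 < \<alpha>" "\<alpha> \<le> 1" "0 < a" "a \<le> 1" "1 < a * b"
  shows "0 < B_tilde \<alpha> a b" "B_tilde \<alpha> a b < 1" "B_tilde \<alpha> a b \<le> a" "1 < B_tilde \<alpha> a b * b"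
proof -
  have "0 < B_tilde \<alpha> a b \<and> B_tilde \<alpha> a b < 1 \<and> B_tilde \<alpha> a b \<le> a \<and> 1 < B_tilde \<alpha> a b * b"
  proof (cases "a < 1")
    case False
    then have "a = 1" "1 < b" using assms by auto
    define D where "D = \<alpha> * (b - 1) + 2"
    have "2 < D" unfolding D_def using assms \<open>1 < b\<close> by simp
    moreover have "D < 2 * b"
      unfolding D_def using assms mult_strict_right_mono[of \<alpha> 2 "b - 1"] \<open>1 < b\<close> by simp
    ultimately show ?thesis
      unfolding B_tilde_def D_def[symmetric] using \<open>a = 1\<close> by (simp add: field_simps)
  qed (use assms in \<open>simp add: B_tilde_def\<close>)
  then show "0 < B_tilde \<alpha> a b" "B_tilde \<alpha> a b < 1" "B_tilde \<alpha> a b \<le> a" "1 < B_tilde \<alpha> a b * b"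
    by auto
qed

lemma B_step_left:
  assumes "0 < \<alpha>" "\<alpha> \<le> 1" "0 < a" "a \<le> 1" "1 < a * b"
  obtains t s where "B_step \<alpha> (a, b) = (1 / t, 1 / s)" "B_welldef \<alpha> (a, b)"
    "0 < t" "t < 1" "t \<le> a" "0 < s" "s < b" "t * s < 1"
    "psi \<alpha> s = 1 / t - t - \<alpha> * b" "1 \<le> s \<Longrightarrow> t = a"
proof -
  define t where "t = B_tilde \<alpha> a b"
  define s where "s = B_s \<alpha> b t"
  note tilde = B_tilde_bounds[OF assms, folded t_def]
  note root = B_s_solves[OF assms(2) tilde(1,4), folded s_def]
  have "0 < b" using tilde(1,4) by (smt (verit) mult_nonneg_nonpos)
  then have "1 / t < b" "1 / b < t" using tilde by (auto simp: field_simps)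
  have "psi \<alpha> s < psi \<alpha> b"
    using root(3) \<open>1 / t < b\<close> \<open>1 / b < t\<close> unfolding psi_def by (simp add: algebra_simps)
  then have "s < b" using psi_less_iff[OF assms(2) root(2) \<open>0 < b\<close>] by simp
  have "\<alpha> * (1 / t) < \<alpha> * b" using \<open>1 / t < b\<close> assms(1) by (rule mult_strict_left_mono)
  moreover have "psi \<alpha> (1 / t) = 1 / t - \<alpha> * (1 / t) - t" unfolding psi_def by (simp add: diff_divide_distrib)
  ultimately have "psi \<alpha> s < psi \<alpha> (1 / t)" using root(3) by linarith
  then have "s < 1 / t" using psi_less_iff[OF assms(2) root(2)] tilde(1) by simp
  then have "t * s < 1" using tilde(1) by (simp add: field_simps)
  \<comment> \<open>at \<open>a = 1\<close> the modified coordinate forces \<open>s < 1\<close>, so the next point stops\<close>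
  have "t = a" if "1 \<le> s"
  proof (rule ccontr)
    assume "t \<noteq> a"
    then have "1 / t = (\<alpha> * (b - 1) + 2) / 2" unfolding t_def B_tilde_def
      by (auto split: if_splits)
    then have psi_s: "psi \<alpha> s = 2 - \<alpha> - (t + 1 / t)" using root(3) by (simp add: algebra_simps)
    have "t + 1 / t - 2 = (1 - t)\<^sup>2 / t" using tilde(1) by (simp add: field_simps power2_eq_square)
    moreover have "0 < (1 - t)\<^sup>2 / t" using tilde(1,2) by simp
    ultimately have "psi \<alpha> s < psi \<alpha> 1" using psi_s unfolding psi_def by simp
    then show False using psi_less_iff[OF assms(2) root(2)] that by simp
  qed
  moreover have "B_step \<alpha> (a, b) = (1 / t, 1 / s)"
    unfolding B_step_def t_def s_def using assms(4) by (simp add: Let_def)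
  moreover have "B_welldef \<alpha> (a, b)"
    unfolding B_welldef_def using assms(4) tilde(1) root(1) by (simp add: t_def)
  ultimately show thesis
    using that tilde root \<open>s < b\<close> \<open>t * s < 1\<close> by blast
qed

lemma B_step_swap:
  assumes "1 < a" "b \<le> 1"
  shows "B_step \<alpha> (a, b) = prod.swap (B_step \<alpha> (b, a))" "B_welldef \<alpha> (a, b) = B_welldef \<alpha> (b, a)"
  using assms unfolding B_step_def B_welldef_def by (auto simp: Let_def)

definition B_stop :: "real \<times> real \<Rightarrow> bool" where
  "B_stop p \<longleftrightarrow> 1 < fst p \<and> 1 < snd p"

definition minor_coord :: "real \<times> real \<Rightarrow> real" where
  "minor_coord p = (if fst p \<le> 1 then fst p else snd p)"

definition major_coord :: "real \<times> real \<Rightarrow> real" where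
  "major_coord p = (if fst p \<le> 1 then snd p else fst p)"

definition level :: "real \<Rightarrow> real \<times> real \<Rightarrow> real" where
  "level \<alpha> p = psi \<alpha> (1 / minor_coord p) - \<alpha> * major_coord p"

definition progress :: "real \<Rightarrow> real \<times> real \<Rightarrow> real" where
  "progress \<alpha> p = psi \<alpha> (major_coord p) - \<alpha> * major_coord p - level \<alpha> p"

text \<open>Since \<open>psi \<alpha> 1 - \<alpha> = -2 * \<alpha>\<close>, the bound on the level makes the progress positive down to
  major coordinate \<open>1\<close>.\<close>
definition admissible :: "real \<Rightarrow> real \<times> real \<Rightarrow> bool" where
  "admissible \<alpha> p \<longleftrightarrow> 0 < fst p \<and> 0 < snd p \<and> 1 < fst p * snd p
     \<and> (\<not> B_stop p \<longrightarrow> level \<alpha> p < - 2 * \<alpha>)"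

lemma minor_major_coord:
  assumes "0 < fst p" "0 < snd p" "\<not> B_stop p"
  shows "0 < minor_coord p" "minor_coord p \<le> 1" "minor_coord p * major_coord p = fst p * snd p"
  using assms unfolding B_stop_def minor_coord_def major_coord_def by auto

lemma admissible_nonstop_bounds:
  assumes "\<alpha> \<le> 1" "admissible \<alpha> p" "\<not> B_stop p"
  shows "1 < major_coord p" "0 < progress \<alpha> p"
proof -
  have pos: "0 < fst p" "0 < snd p" "1 < fst p * snd p" using assms(2) unfolding admissible_def by auto
  note coords = minor_major_coord[OF pos(1,2) assms(3)]
  then have "1 / minor_coord p < major_coord p" using pos(3) by (simp add: field_simps)
  moreover have "1 \<le> 1 / minor_coord p" using coords by simp
  ultimately show "1 < major_coord p" by linarith
  have "psi \<alpha> (1 / minor_coord p) < psi \<alpha> (major_coord p)"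
    using psi_less_iff[OF assms(1)] coords \<open>1 / minor_coord p < major_coord p\<close> \<open>1 < major_coord p\<close>
    by simp
  then show "0 < progress \<alpha> p"
    unfolding progress_def level_def by simp
qed

lemma swap_coords:
  assumes "0 < fst p" "0 < snd p" "1 < fst p * snd p" "\<not> B_stop p"
  shows "major_coord (prod.swap p) = major_coord p" "level \<alpha> (prod.swap p) = level \<alpha> p"
proof -
  have "\<not> (fst p \<le> 1 \<and> snd p \<le> 1)" using assms mult_mono[of "fst p" 1 "snd p" 1] by auto
  then show "major_coord (prod.swap p) = major_coord p" "level \<alpha> (prod.swap p) = level \<alpha> p"
    using assms(4) unfolding level_def minor_coord_def major_coord_def B_stop_def by auto
qed

lemma admissible_swap: "admissible \<alpha> (prod.swap p) \<longleftrightarrow> admissible \<alpha> p"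
  using swap_coords[of p] unfolding admissible_def B_stop_def by (auto simp: mult.commute)

lemma B_step_admissible_left:
  assumes "0 < \<alpha>" "\<alpha> \<le> 1" "admissible \<alpha> (a, b)" "a \<le> 1"
  defines "q \<equiv> B_step \<alpha> (a, b)"
  shows "B_welldef \<alpha> (a, b)" "admissible \<alpha> q"
    "\<not> B_stop q \<Longrightarrow> level \<alpha> q = level \<alpha> (a, b)
       \<and> major_coord q \<le> major_coord (a, b) - progress \<alpha> (a, b) / 2"
proof -
  have "0 < a" "1 < a * b" and level_p: "level \<alpha> (a, b) < - 2 * \<alpha>"
    using assms(3,4) unfolding admissible_def B_stop_def by auto
  obtain t s where q: "q = (1 / t, 1 / s)" and "B_welldef \<alpha> (a, b)"
    and ts: "0 < t" "t < 1" "0 < s" "t * s < 1" "psi \<alpha> s = 1 / t - t - \<alpha> * b" "1 \<le> s \<Longrightarrow> t = a"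
    using B_step_left[OF assms(1,2) \<open>0 < a\<close> assms(4) \<open>1 < a * b\<close>] unfolding q_def by metis
  then show "B_welldef \<alpha> (a, b)" by simp
  have level_p_eq: "level \<alpha> (a, b) = psi \<alpha> (1 / a) - \<alpha> * b" "major_coord (a, b) = b"
    using assms(4) unfolding level_def minor_coord_def major_coord_def by auto
  have "1 < 1 / t" "1 < 1 / t * (1 / s)" using ts by (auto simp: field_simps)
  have conserved: "level \<alpha> q = level \<alpha> (a, b)" "major_coord q = 1 / a" if "\<not> B_stop q"
  proof -
    have "1 \<le> s" using that q \<open>1 < 1 / t\<close> ts(3) unfolding B_stop_def by (auto simp: field_simps)
    then have "t = a" using ts(6) by simp
    then have "level \<alpha> q = psi \<alpha> s - \<alpha> / a"
      using q \<open>1 < 1 / t\<close> unfolding level_def minor_coord_def major_coord_def by auto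
    moreover have "psi \<alpha> (1 / a) = 1 / a - \<alpha> / a - a" unfolding psi_def by (simp add: diff_divide_distrib)
    ultimately show "level \<alpha> q = level \<alpha> (a, b)" using ts(5) level_p_eq \<open>t = a\<close> by simp
    show "major_coord q = 1 / a" using q \<open>1 < 1 / t\<close> \<open>t = a\<close> unfolding major_coord_def by simp
  qed
  have "\<not> B_stop q \<longrightarrow> level \<alpha> q < - 2 * \<alpha>" using conserved(1) level_p by auto
  then show "admissible \<alpha> q"
    unfolding admissible_def using q ts \<open>1 < 1 / t * (1 / s)\<close> by simp
  assume "\<not> B_stop q"
  have "1 \<le> 1 / a" "1 / a \<le> b" using \<open>0 < a\<close> assms(4) \<open>1 < a * b\<close> by (auto simp: field_simps)
  then have "psi \<alpha> b - psi \<alpha> (1 / a) \<le> 2 * (b - 1 / a)" using assms(1) by (intro psi_diff_le) auto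
  moreover have "progress \<alpha> (a, b) = psi \<alpha> b - psi \<alpha> (1 / a)"
    using level_p_eq unfolding progress_def by simp
  ultimately have "major_coord q \<le> major_coord (a, b) - progress \<alpha> (a, b) / 2"
    using conserved(2)[OF \<open>\<not> B_stop q\<close>] level_p_eq(2) by argo
  with conserved(1)[OF \<open>\<not> B_stop q\<close>]
  show "level \<alpha> q = level \<alpha> (a, b) \<and> major_coord q \<le> major_coord (a, b) - progress \<alpha> (a, b) / 2"
    by simp
qed

lemma B_step_admissible:
  assumes "0 < \<alpha>" "\<alpha> \<le> 1" "admissible \<alpha> p" "\<not> B_stop p"
  shows "B_welldef \<alpha> p" "admissible \<alpha> (B_step \<alpha> p)"
    "\<not> B_stop (B_step \<alpha> p) \<Longrightarrow> level \<alpha> (B_step \<alpha> p) = level \<alpha> p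
       \<and> major_coord (B_step \<alpha> p) \<le> major_coord p - progress \<alpha> p / 2"
proof -
  obtain a b where p: "p = (a, b)" by fastforce
  have "B_welldef \<alpha> (a, b) \<and> admissible \<alpha> (B_step \<alpha> (a, b))
    \<and> (\<not> B_stop (B_step \<alpha> (a, b)) \<longrightarrow> level \<alpha> (B_step \<alpha> (a, b)) = level \<alpha> (a, b)
       \<and> major_coord (B_step \<alpha> (a, b)) \<le> major_coord (a, b) - progress \<alpha> (a, b) / 2)"
  proof (cases "a \<le> 1")
    case True
    then show ?thesis using B_step_admissible_left[OF assms(1,2)] assms(3) p by simp
  next
    case False
    then have "b \<le> 1" using assms(4) p unfolding B_stop_def by auto
    have "admissible \<alpha> (b, a)" using assms(3) p admissible_swap[of \<alpha> "(a, b)"] by simp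
    define q where "q = B_step \<alpha> (b, a)"
    note left = B_step_admissible_left[OF assms(1,2) \<open>admissible \<alpha> (b, a)\<close> \<open>b \<le> 1\<close>, folded q_def]
    note swap_step = B_step_swap[OF _ \<open>b \<le> 1\<close>, of a \<alpha>, folded q_def]
    have "major_coord (prod.swap q) = major_coord q \<and> level \<alpha> (prod.swap q) = level \<alpha> q"
      if "\<not> B_stop q" using left(2) swap_coords that unfolding admissible_def by blast
    moreover have "major_coord (b, a) = major_coord (a, b)" "level \<alpha> (b, a) = level \<alpha> (a, b)"
      using swap_coords[of "(a, b)"] assms(3,4) p unfolding admissible_def by auto
    ultimately show ?thesis
      using left swap_step False admissible_swap[of \<alpha> q]
      unfolding progress_def B_stop_def by (auto simp: prod.swap_def)
  qed
  then show "B_welldef \<alpha> p" "admissible \<alpha> (B_step \<alpha> p)"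
    "\<not> B_stop (B_step \<alpha> p) \<Longrightarrow> level \<alpha> (B_step \<alpha> p) = level \<alpha> p
       \<and> major_coord (B_step \<alpha> p) \<le> major_coord p - progress \<alpha> p / 2"
    using p by auto
qed

lemma weight_transfer:
  fixes g h :: "real \<Rightarrow> real \<Rightarrow> real"
  assumes "0 \<le> \<alpha>" "0 \<le> \<gamma>"
    and h_nonneg: "\<And>x y. 0 < x \<Longrightarrow> 0 < y \<Longrightarrow> 0 \<le> h x y"
    and h_le_g: "\<And>x y. 0 < x \<Longrightarrow> 0 < y \<Longrightarrow> h x y \<le> g x y"
    and g_inversion: "\<And>x y. 0 < x \<Longrightarrow> 0 < y \<Longrightarrow>
           exp (\<gamma> * (x + y)) * g x y = exp (\<gamma> * (1 / x + 1 / y)) * g (1 / x) (1 / y)"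
    and h_decay_x: "\<And>x x' y. 0 < x' \<Longrightarrow> x' \<le> x \<Longrightarrow> 0 < y \<Longrightarrow>
           h x y \<le> exp (- \<alpha> * \<gamma> * (x - x')) * h x' y"
    and h_decay_y: "\<And>x y y'. 0 < y' \<Longrightarrow> y' \<le> y \<Longrightarrow> 0 < x \<Longrightarrow>
           h x y \<le> exp (- \<alpha> * \<gamma> * (y - y')) * h x y'"
    and "0 < t" "t \<le> a" "0 < s" "s \<le> b"
    and balance: "t + s = 1 / t + 1 / s - \<alpha> * (b - s)"
  shows "h a b \<le> g (1 / t) (1 / s)"
proof -
  define w where "w = exp (- \<alpha> * \<gamma> * (b - s))"
  have "exp (- \<alpha> * \<gamma> * (a - t)) \<le> 1"
    using assms(1,2,9) by simp
  then have "exp (- \<alpha> * \<gamma> * (a - t)) * h t b \<le> h t b"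
    using h_nonneg[of t b] assms(8-11) by (intro mult_left_le_one_le) auto
  then have "h a b \<le> h t b"
    using h_decay_x[of t a b] assms(8-11) by linarith
  also have "\<dots> \<le> w * h t s" unfolding w_def using h_decay_y[of s b t] assms(8-11) by simp
  also have "\<dots> \<le> w * g t s" unfolding w_def using h_le_g[of t s] assms(8,10) by simp
  also have "\<dots> = g (1 / t) (1 / s)"
  proof -
    have "\<gamma> * (t + s) = \<gamma> * (1 / t + 1 / s) + (- \<alpha> * \<gamma> * (b - s))"
      unfolding balance by (simp add: algebra_simps)
    then have "exp (\<gamma> * (t + s)) = exp (\<gamma> * (1 / t + 1 / s)) * w"
      unfolding w_def by (simp only: exp_add)
    then have "exp (\<gamma> * (1 / t + 1 / s)) * (w * g t s) = exp (\<gamma> * (1 / t + 1 / s)) * g (1 / t) (1 / s)"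
      using g_inversion[of t s] assms(8,10) by (simp add: mult.assoc)
    then show ?thesis by simp
  qed
  finally show ?thesis .
qed

lemma B_step_weight:
  fixes g h :: "real \<Rightarrow> real \<Rightarrow> real"
  assumes "0 < \<alpha>" "\<alpha> \<le> 1" "0 \<le> \<gamma>"
    and h_nonneg: "\<And>x y. 0 < x \<Longrightarrow> 0 < y \<Longrightarrow> 0 \<le> h x y"
    and h_le_g: "\<And>x y. 0 < x \<Longrightarrow> 0 < y \<Longrightarrow> h x y \<le> g x y"
    and g_inversion: "\<And>x y. 0 < x \<Longrightarrow> 0 < y \<Longrightarrow>
           exp (\<gamma> * (x + y)) * g x y = exp (\<gamma> * (1 / x + 1 / y)) * g (1 / x) (1 / y)"
    and h_decay_x: "\<And>x x' y. 0 < x' \<Longrightarrow> x' \<le> x \<Longrightarrow> 0 < y \<Longrightarrow>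
           h x y \<le> exp (- \<alpha> * \<gamma> * (x - x')) * h x' y"
    and h_decay_y: "\<And>x y y'. 0 < y' \<Longrightarrow> y' \<le> y \<Longrightarrow> 0 < x \<Longrightarrow>
           h x y \<le> exp (- \<alpha> * \<gamma> * (y - y')) * h x y'"
    and "admissible \<alpha> p" "\<not> B_stop p"
  shows "h (fst p) (snd p) \<le> g (fst (B_step \<alpha> p)) (snd (B_step \<alpha> p))"
proof -
  obtain a b where p: "p = (a, b)" by fastforce
  have "0 < a" "0 < b" "1 < a * b" using assms(9) p unfolding admissible_def by auto
  have balance: "t + s = 1 / t + 1 / s - \<alpha> * (c - s)" if "psi \<alpha> s = 1 / t - t - \<alpha> * c" for t s c
    using that unfolding psi_def by (simp add: algebra_simps)
  show ?thesis
  proof (cases "a \<le> 1")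
    case True
    obtain t s where "B_step \<alpha> (a, b) = (1 / t, 1 / s)" "0 < t" "t \<le> a" "0 < s" "s < b"
      "psi \<alpha> s = 1 / t - t - \<alpha> * b"
      using B_step_left[OF assms(1,2) \<open>0 < a\<close> True \<open>1 < a * b\<close>] by metis
    with weight_transfer[OF _ assms(3) h_nonneg h_le_g g_inversion h_decay_x h_decay_y] balance assms(1)
    show ?thesis using p by simp
  next
    case False
    then have "b \<le> 1" using assms(10) p unfolding B_stop_def by auto
    obtain t s where "B_step \<alpha> (b, a) = (1 / t, 1 / s)" "0 < t" "t \<le> b" "0 < s" "s < a"
      "psi \<alpha> s = 1 / t - t - \<alpha> * a"
      using B_step_left[OF assms(1,2) \<open>0 < b\<close> \<open>b \<le> 1\<close>] \<open>1 < a * b\<close> by (metis mult.commute)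
    moreover have "h a b \<le> g (1 / s) (1 / t)"
    proof (rule weight_transfer[where h = "\<lambda>x y. h y x" and g = "\<lambda>x y. g y x"])
      show "exp (\<gamma> * (x + y)) * g y x = exp (\<gamma> * (1 / x + 1 / y)) * g (1 / y) (1 / x)"
        if "0 < x" "0 < y" for x y
        using g_inversion[of y x] that by (simp add: add.commute)
    qed (use calculation balance assms(1,3) h_nonneg h_le_g h_decay_x h_decay_y in auto)
    ultimately show ?thesis using p B_step_swap[OF _ \<open>b \<le> 1\<close>] False by simp
  qed
qed

lemma B_orbit_stops:
  assumes "0 < \<alpha>" "\<alpha> \<le> 1" "admissible \<alpha> p"
  shows "\<exists>n. B_stop ((B_step \<alpha> ^^ n) p)"
proof (cases "B_stop p")
  case True
  then show ?thesis by (metis funpow_0)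
next
  case False
  define K L where "K = level \<alpha> p" and "L = major_coord p"
  define \<delta> where "\<delta> = min (psi \<alpha> 1 - \<alpha> * 1 - K) (psi \<alpha> L - \<alpha> * L - K)"
  have "0 < \<delta>"
    using admissible_nonstop_bounds(2)[OF assms(2,3) False] assms(3) False
    unfolding \<delta>_def K_def L_def admissible_def progress_def psi_def by auto
  \<comment> \<open>\<open>w \<mapsto> psi \<alpha> w - \<alpha> w\<close> is concave, so \<open>\<delta>\<close> bounds the progress along the whole orbit\<close>
  have \<delta>_le: "\<delta> \<le> psi \<alpha> w - \<alpha> * w - K" if "1 \<le> w" "w \<le> L" for w
    using min_le_affine_minus_inverse[of 1 w L "1 - 2 * \<alpha>"] that
    unfolding \<delta>_def psi_def by (simp add: algebra_simps)
  show ?thesis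
  proof (rule funpow_reaches_by_descent[where P = "\<lambda>q. admissible \<alpha> q \<and> level \<alpha> q = K \<and> major_coord q \<le> L"
        and V = major_coord and c = 1 and d = "\<delta> / 2"])
    fix q
    assume q: "admissible \<alpha> q \<and> level \<alpha> q = K \<and> major_coord q \<le> L" "\<not> B_stop q"
    note bounds = admissible_nonstop_bounds[OF assms(2) q(1)[THEN conjunct1] q(2)]
    then show "1 \<le> major_coord q" by simp
    assume "\<not> B_stop (B_step \<alpha> q)"
    with B_step_admissible[OF assms(1,2) q(1)[THEN conjunct1] q(2)]
    have "admissible \<alpha> (B_step \<alpha> q)" "level \<alpha> (B_step \<alpha> q) = level \<alpha> q"
      "major_coord (B_step \<alpha> q) \<le> major_coord q - progress \<alpha> q / 2" by auto
    moreover have "\<delta> \<le> progress \<alpha> q"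
      using \<delta>_le[of "major_coord q"] q(1) bounds(1) unfolding progress_def by simp
    ultimately show "(admissible \<alpha> (B_step \<alpha> q) \<and> level \<alpha> (B_step \<alpha> q) = K \<and> major_coord (B_step \<alpha> q) \<le> L)
      \<and> major_coord (B_step \<alpha> q) \<le> major_coord q - \<delta> / 2"
      using q(1) \<open>0 < \<delta>\<close> by auto
  qed (use \<open>0 < \<delta>\<close> assms(3) K_def L_def in auto)
qed

lemma B_orbit:
  assumes "0 < \<alpha>" "\<alpha> \<le> 1" "admissible \<alpha> p"
  obtains n where "\<And>i. i \<le> n \<Longrightarrow> admissible \<alpha> ((B_step \<alpha> ^^ i) p)"
    "\<And>i. i < n \<Longrightarrow> \<not> B_stop ((B_step \<alpha> ^^ i) p)" "B_stop ((B_step \<alpha> ^^ n) p)"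
proof -
  define n where "n = (LEAST n. B_stop ((B_step \<alpha> ^^ n) p))"
  have stop: "B_stop ((B_step \<alpha> ^^ n) p)"
    unfolding n_def using B_orbit_stops[OF assms] by (rule LeastI_ex)
  have running: "\<not> B_stop ((B_step \<alpha> ^^ i) p)" if "i < n" for i
    using not_less_Least that unfolding n_def by blast
  have "admissible \<alpha> ((B_step \<alpha> ^^ i) p)" if "i \<le> n" for i
    using that
  proof (induction i)
    case (Suc i)
    then show ?case using B_step_admissible(2)[OF assms(1,2)] running[of i] by simp
  qed (use assms(3) in simp)
  with that running stop show thesis by blast
qed

lemma B_pt_funpow:
  "B_pt \<alpha> p (Suc n) = (B_step \<alpha> ^^ n) p"
  "(\<forall>i\<in>{1..Suc n}. P (B_pt \<alpha> p i)) \<longleftrightarrow> (\<forall>i\<le>n. P ((B_step \<alpha> ^^ i) p))"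
  "(\<forall>i\<in>{1..<Suc n}. P (B_pt \<alpha> p i)) \<longleftrightarrow> (\<forall>i<n. P ((B_step \<alpha> ^^ i) p))"
  "(\<Sum>i=1..Suc n. h (B_pt \<alpha> p i)) = (\<Sum>i<Suc n. h ((B_step \<alpha> ^^ i) p))"
proof -
  have "{1..Suc n} = Suc ` {..n}" "{1..<Suc n} = Suc ` {..<n}"
    by (simp_all add: atMost_atLeast0 lessThan_atLeast0)
  then show "B_pt \<alpha> p (Suc n) = (B_step \<alpha> ^^ n) p"
    "(\<forall>i\<in>{1..Suc n}. P (B_pt \<alpha> p i)) \<longleftrightarrow> (\<forall>i\<le>n. P ((B_step \<alpha> ^^ i) p))"
    "(\<forall>i\<in>{1..<Suc n}. P (B_pt \<alpha> p i)) \<longleftrightarrow> (\<forall>i<n. P ((B_step \<alpha> ^^ i) p))"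
    by (auto simp: B_pt_def)
  show "(\<Sum>i=1..Suc n. h (B_pt \<alpha> p i)) = (\<Sum>i<Suc n. h ((B_step \<alpha> ^^ i) p))"
    by (simp add: sum.atLeast1_atMost_eq B_pt_def)
qed

lemma B_orbit_telescoping:
  fixes G G_keep G_pass :: "real \<times> real \<Rightarrow> real"
  assumes split: "\<And>q. admissible \<alpha> q \<Longrightarrow> G q = G_keep q + G_pass q"
    and weight: "\<And>q. admissible \<alpha> q \<Longrightarrow> \<not> B_stop q \<Longrightarrow> G_pass q \<le> G (B_step \<alpha> q)"
    and admissible_orbit: "\<And>i. i \<le> n \<Longrightarrow> admissible \<alpha> ((B_step \<alpha> ^^ i) p)"
    and running: "\<And>i. i < n \<Longrightarrow> \<not> B_stop ((B_step \<alpha> ^^ i) p)"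
  shows "G p \<le> (\<Sum>i=1..Suc n. G_keep (B_pt \<alpha> p i)) + G_pass (B_pt \<alpha> p (Suc n))"
proof -
  have "G ((B_step \<alpha> ^^ i) p) \<le> G_keep ((B_step \<alpha> ^^ i) p) + G ((B_step \<alpha> ^^ Suc i) p)" if "i < n" for i
    using split[OF admissible_orbit] weight[OF admissible_orbit running[OF that]] that by simp
  then have "G p \<le> (\<Sum>i<n. G_keep ((B_step \<alpha> ^^ i) p)) + G ((B_step \<alpha> ^^ n) p)"
    by (rule funpow_telescoping_bound)
  then show ?thesis
    using split[OF admissible_orbit[of n]] unfolding B_pt_funpow(1,4) by simp
qed

lemma f_alpha_less_imp_level:
  assumes "0 < \<alpha>" "\<alpha> \<le> 1" "1 < X" "f_alpha \<alpha> X < Y"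
  shows "0 < Y" "1 < X * Y" "psi \<alpha> (1 / Y) - \<alpha> * X < - 2 * \<alpha>"
proof -
  define \<beta> where "\<beta> = \<alpha> * (2 - X)"
  define R where "R = sqrt (\<beta>\<^sup>2 + 4 * (1 - \<alpha>))"
  have radicand: "0 \<le> \<beta>\<^sup>2 + 4 * (1 - \<alpha>)" using assms(2) by (intro add_nonneg_nonneg) auto
  then have R2: "R\<^sup>2 = \<beta>\<^sup>2 + 4 * (1 - \<alpha>)" unfolding R_def by (rule real_sqrt_pow2)
  have "0 \<le> R" unfolding R_def using radicand by (rule real_sqrt_ge_zero)
  have "f_alpha \<alpha> X = max (1 / X) ((\<beta> + R) / 2)"
    unfolding f_alpha_def \<beta>_def R_def by (simp add: power_mult_distrib)
  then have "1 / X < Y" and root: "(\<beta> + R) / 2 < Y" using assms(4) by auto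
  moreover have "0 < 1 / X" using assms(3) by simp
  ultimately show "0 < Y" by linarith
  then show "1 < X * Y" using \<open>1 / X < Y\<close> assms(3) by (simp add: field_simps)
  \<comment> \<open>\<open>(\<beta> \<plusminus> R) / 2\<close> are the roots of \<open>Y\<^sup>2 - \<beta> Y - (1 - \<alpha>)\<close>\<close>
  have "0 < (Y - (\<beta> + R) / 2) * (Y - (\<beta> - R) / 2)"
    using root \<open>0 \<le> R\<close> by (intro mult_pos_pos) auto
  also have "\<dots> = Y * Y - \<beta> * Y + (\<beta>\<^sup>2 - R\<^sup>2) / 4"
    by (simp add: power2_eq_square field_simps)
  also have "\<dots> = Y * Y - \<beta> * Y - (1 - \<alpha>)"
    using R2 by simp
  finally have "0 < Y * Y - \<beta> * Y - (1 - \<alpha>)" .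
  moreover have "psi \<alpha> (1 / Y) - \<alpha> * X + 2 * \<alpha> = - (Y * Y - \<beta> * Y - (1 - \<alpha>)) / Y"
    unfolding psi_def \<beta>_def using \<open>0 < Y\<close> by (simp add: field_simps)
  ultimately show "psi \<alpha> (1 / Y) - \<alpha> * X < - 2 * \<alpha>"
    using \<open>0 < Y\<close> divide_pos_pos[of "Y * Y - \<beta> * Y - (1 - \<alpha>)" Y] by linarith
qed

lemma Omega_alpha_admissible:
  assumes "0 < \<alpha>" "\<alpha> \<le> 1" "p \<in> Omega_alpha \<alpha>"
  shows "admissible \<alpha> p"
proof -
  obtain x y where p: "p = (x, y)" by fastforce
  have "(1 < x \<and> f_alpha \<alpha> x < y) \<or> (1 < y \<and> f_alpha \<alpha> y < x)"
    using assms(3) p unfolding Omega_alpha_def by auto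
  then show ?thesis
  proof
    assume "1 < x \<and> f_alpha \<alpha> x < y"
    with f_alpha_less_imp_level[OF assms(1,2), of x y] show ?thesis
      unfolding p admissible_def B_stop_def level_def minor_coord_def major_coord_def by auto
  next
    assume "1 < y \<and> f_alpha \<alpha> y < x"
    with f_alpha_less_imp_level[OF assms(1,2), of y x] show ?thesis
      unfolding p admissible_def B_stop_def level_def minor_coord_def major_coord_def
      by (auto simp: mult.commute)
  qed
qed

theorem lemma1:
  fixes \<alpha> \<gamma> :: real and g g0 g1 :: "real \<Rightarrow> real \<Rightarrow> real"
  assumes "0 < \<alpha>" "\<alpha> \<le> 1" "0 \<le> \<gamma>"
    and "\<And>x y. x > 0 \<Longrightarrow> y > 0 \<Longrightarrow> g x y > 0"
    and "\<And>x y. x > 0 \<Longrightarrow> y > 0 \<Longrightarrow> g0 x y \<ge> 0"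
    and "\<And>x y. x > 0 \<Longrightarrow> y > 0 \<Longrightarrow> g1 x y \<ge> 0"
    and "\<And>x y. x > 0 \<Longrightarrow> y > 0 \<Longrightarrow> g x y = g0 x y + g1 x y"
    and "\<And>x y. x > 0 \<Longrightarrow> y > 0 \<Longrightarrow>
           exp (\<gamma> * (x + y)) * g x y = exp (\<gamma> * (1 / x + 1 / y)) * g (1 / x) (1 / y)"
    and "\<And>x x' y. 0 < x' \<Longrightarrow> x' \<le> x \<Longrightarrow> y > 0 \<Longrightarrow>
           g1 x y \<le> exp (- \<alpha> * \<gamma> * (x - x')) * g1 x' y"
    and "\<And>x y y'. 0 < y' \<Longrightarrow> y' \<le> y \<Longrightarrow> x > 0 \<Longrightarrow>
           g1 x y \<le> exp (- \<alpha> * \<gamma> * (y - y')) * g1 x y'"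
    and "(x, y) \<in> Omega_alpha \<alpha>"
  shows "\<exists>N::nat. N \<ge> 1
     \<and> (\<forall>i\<in>{1..N}. fst (B_pt \<alpha> (x, y) i) > 0 \<and> snd (B_pt \<alpha> (x, y) i) > 0)
     \<and> (\<forall>i\<in>{1..<N}. \<not> (fst (B_pt \<alpha> (x, y) i) > 1 \<and> snd (B_pt \<alpha> (x, y) i) > 1)
                      \<and> B_welldef \<alpha> (B_pt \<alpha> (x, y) i))
     \<and> fst (B_pt \<alpha> (x, y) N) > 1 \<and> snd (B_pt \<alpha> (x, y) N) > 1
     \<and> g x y \<le> (\<Sum>i=1..N. g0 (fst (B_pt \<alpha> (x, y) i)) (snd (B_pt \<alpha> (x, y) i)))
               + g1 (fst (B_pt \<alpha> (x, y) N)) (snd (B_pt \<alpha> (x, y) N))"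
proof -
  obtain n where admissible_orbit: "\<And>i. i \<le> n \<Longrightarrow> admissible \<alpha> ((B_step \<alpha> ^^ i) (x, y))"
    and running: "\<And>i. i < n \<Longrightarrow> \<not> B_stop ((B_step \<alpha> ^^ i) (x, y))"
    and stop: "B_stop ((B_step \<alpha> ^^ n) (x, y))"
    using B_orbit[OF assms(1,2) Omega_alpha_admissible[OF assms(1,2,11)]] by blast
  have g1_le_g: "g1 u v \<le> g u v" if "0 < u" "0 < v" for u v using assms(5,7)[OF that] by simp
  have weight: "g1 (fst q) (snd q) \<le> g (fst (B_step \<alpha> q)) (snd (B_step \<alpha> q))"
    if "admissible \<alpha> q" "\<not> B_stop q" for q
    by (rule B_step_weight[where g = g and h = g1]) (use assms(1-3,6,8-10) g1_le_g that in blast)+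
  have split: "g (fst q) (snd q) = g0 (fst q) (snd q) + g1 (fst q) (snd q)" if "admissible \<alpha> q" for q
    using assms(7) that unfolding admissible_def by simp
  have "g (fst (x, y)) (snd (x, y))
      \<le> (\<Sum>i=1..Suc n. g0 (fst (B_pt \<alpha> (x, y) i)) (snd (B_pt \<alpha> (x, y) i)))
        + g1 (fst (B_pt \<alpha> (x, y) (Suc n))) (snd (B_pt \<alpha> (x, y) (Suc n)))"
    by (rule B_orbit_telescoping[where G = "\<lambda>q. g (fst q) (snd q)" and G_keep = "\<lambda>q. g0 (fst q) (snd q)"
        and G_pass = "\<lambda>q. g1 (fst q) (snd q)"]) (use split weight admissible_orbit running in blast)+
  moreover have "\<forall>i\<in>{1..Suc n}. 0 < fst (B_pt \<alpha> (x, y) i) \<and> 0 < snd (B_pt \<alpha> (x, y) i)"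
    unfolding B_pt_funpow(2)[where P = "\<lambda>q. 0 < fst q \<and> 0 < snd q"]
    using admissible_orbit unfolding admissible_def by blast
  moreover have "\<forall>i\<in>{1..<Suc n}. \<not> (1 < fst (B_pt \<alpha> (x, y) i) \<and> 1 < snd (B_pt \<alpha> (x, y) i))
      \<and> B_welldef \<alpha> (B_pt \<alpha> (x, y) i)"
    unfolding B_pt_funpow(3)[where P = "\<lambda>q. \<not> (1 < fst q \<and> 1 < snd q) \<and> B_welldef \<alpha> q"]
    using running B_step_admissible(1)[OF assms(1,2) admissible_orbit running]
    unfolding B_stop_def by auto
  ultimately show ?thesis
    using stop unfolding B_stop_def by (intro exI[of _ "Suc n"]) (auto simp: B_pt_funpow(1))
qed

end
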